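(* Let $q\ge2$ and $s\ge2$ be integers. There exist constants $\varepsilon_0>0$, $\delta_0>0$, $L_0>0$, $C>0$ and $k_0\in\mathbb{N}$ (depending only on $q,s$) such that the following holds. Suppose $f\colon\mathbb{N}_0\to\mathbb{U}$ is $q$-multiplicative, $p\in\mathbb{R}[x]$ with $\deg p<s$, and for some $\varepsilon<\varepsilon_0$, $\delta<\delta_0$ and $L\ge L_0$ we have: for all but at most $\delta q^L$ integers $n\in\{0,\dots,q^L-1\}$, $f(n)=e(p(n)+\theta_n)$ with $|\theta_n|\le\varepsilon$. Then there exist $\alpha,\beta\in\mathbb{R}$ and $b\in\mathbb{Q}[x]$ such that $n\mapsto b(n)\bmod 1$ is periodic with period $q^{k}$ for some $k\le k_0$, and for all but at most $\delta q^L$ integers $n\in\{0,\dots,q^L-1\}$, $f(n)=e(\alpha n+\beta+b(n)+\theta'_n)$ with $|\theta'_n|\le C\varepsilon$.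
   Context: $\mathbb{N}_0=\{0,1,\dots\}$, $\mathbb{U}=\{z\in\mathbb{C}:|z|=1\}$, $e(t)=e^{2\pi i t}$. $f$ is $q$-multiplicative if $f(m+n)=f(m)f(n)$ whenever $t,m,n\ge0$, $m<q^t$, $q^t\mid n$. *)

theory Defs
  imports "HOL-Analysis.Analysis" "HOL-Computational_Algebra.Polynomial"
begin

definition e :: "real \<Rightarrow> complex" where
  "e t = exp (2 * pi * \<i> * complex_of_real t)"

definition q_multiplicative :: "nat \<Rightarrow> (nat \<Rightarrow> complex) \<Rightarrow> bool" where
  "q_multiplicative q f \<longleftrightarrow>
     (\<forall>t m n. m < q ^ t \<and> q ^ t dvd n \<longrightarrow> f (m + n) = f m * f n)"

end

theory Submission
  imports Defs
begin

text \<open>Write \<open>f n = e (\<phi> n)\<close>. If the \<open>j\<close>-th digit of \<open>a\<close> vanishes, \<open>q\<close>-multiplicativity gives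
  \<open>\<phi> (v + q\<^sup>j) = \<phi> v + \<phi> (q\<^sup>j)\<close> modulo 1 at every \<open>v = a + m q\<^sup>j\<^sup>+\<^sup>1\<close>, so on a cube with one
  step \<open>q\<^sup>j\<close> and \<open>r - 1\<close> steps \<open>q\<^sup>j\<^sup>+\<^sup>1\<close> the \<open>r\<close>-th difference of \<open>\<phi>\<close> is an integer. Such cubes
  avoiding the exceptional \<open>n\<close> exist at every scale, and there the \<open>r\<close>-th difference of \<open>p\<close> is
  within \<open>2\<^sup>r \<epsilon>\<close> of an integer. For \<open>r = k = deg p\<close> that difference is \<open>k! c q\<^sup>k\<^sup>j\<^sup>+\<^sup>k\<^sup>-\<^sup>1\<close>,
  \<open>c\<close> the leading coefficient, and letting \<open>j\<close> grow forces \<open>c = N / (k! q\<^sup>m) + \<eta>\<close> with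
  \<open>\<eta> q\<^sup>k\<^sup>L = O(\<epsilon>)\<close>. Now \<open>N q\<^sup>-\<^sup>m binomial n k\<close> is periodic modulo 1 with period \<open>q\<^sup>m\<^sup>+\<^sup>k\<close>
  and \<open>\<eta> n\<^sup>k = O(\<epsilon>)\<close> on \<open>[0, q\<^sup>L)\<close>; subtracting both lowers the degree and keeps the cube
  property at a coarser scale. The induction ends in degree 1, which is \<open>\<alpha> n + \<beta>\<close>.\<close>

section \<open>Iterated differences over cubes\<close>

fun cube_diff :: "(nat \<Rightarrow> 'a::ab_group_add) \<Rightarrow> nat list \<Rightarrow> nat \<Rightarrow> 'a" where
  "cube_diff g [] a = g a"
| "cube_diff g (h # hs) a = cube_diff g hs (a + h) - cube_diff g hs a"

fun cube_vertices :: "nat list \<Rightarrow> nat \<Rightarrow> nat set" where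
  "cube_vertices [] a = {a}"
| "cube_vertices (h # hs) a = cube_vertices hs a \<union> cube_vertices hs (a + h)"

lemma cube_diff_shift: "cube_diff g hs (a + x) = cube_diff (\<lambda>n. g (n + x)) hs a"
proof (induction hs arbitrary: a)
  case (Cons h hs)
  have "cube_diff g (h # hs) (a + x) = cube_diff g hs ((a + h) + x) - cube_diff g hs (a + x)"
    by (simp add: ac_simps)
  then show ?case using Cons by simp
qed simp

lemma cube_diff_diff: "cube_diff (\<lambda>n. g n - g' n) hs a = cube_diff g hs a - cube_diff g' hs a"
  by (induction hs arbitrary: a) simp_all

lemma cube_diff_Cons': "cube_diff g (h # hs) a = cube_diff (\<lambda>n. g (n + h) - g n) hs a"
  by (simp add: cube_diff_shift cube_diff_diff)

lemma cube_diff_add: "cube_diff (\<lambda>n. g n + g' n) hs a = cube_diff g hs a + cube_diff g' hs a"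
  by (induction hs arbitrary: a) simp_all

lemma cube_diff_mult_left:
  "cube_diff (\<lambda>n. c * g n) hs a = (c :: 'a::ring) * cube_diff g hs a"
  by (induction hs arbitrary: a) (simp_all add: right_diff_distrib)

lemma cube_diff_sum: "cube_diff (\<lambda>n. \<Sum>l\<in>A. g l n) hs a = (\<Sum>l\<in>A. cube_diff (g l) hs a)"
  by (induction hs arbitrary: a) (simp_all add: sum_subtractf)

lemma cube_diff_const: "hs \<noteq> [] \<Longrightarrow> cube_diff (\<lambda>_. c) hs a = 0"
proof (induction hs arbitrary: a)
  case (Cons h hs)
  then show ?case by (cases "hs = []") simp_all
qed simp

lemma cube_diff_Ints:
  "(\<And>v. v \<in> cube_vertices hs a \<Longrightarrow> g v \<in> \<int>) \<Longrightarrow> cube_diff (g :: nat \<Rightarrow> 'a::ring_1) hs a \<in> \<int>"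
  by (induction hs arbitrary: a) (simp_all add: Ints_diff)

lemma cube_diff_Ints_of_diff_Ints:
  fixes g :: "nat \<Rightarrow> 'a::ring_1"
  assumes "hs \<noteq> []" and "\<And>v. v \<in> cube_vertices hs a \<Longrightarrow> g v - c \<in> \<int>"
  shows "cube_diff g hs a \<in> \<int>"
proof -
  have "cube_diff g hs a = cube_diff (\<lambda>n. g n - c) hs a"
    using cube_diff_diff[of g "\<lambda>_. c"] cube_diff_const[OF assms(1)] by simp
  also have "\<dots> \<in> \<int>" by (rule cube_diff_Ints) (rule assms(2))
  finally show ?thesis .
qed

lemma cube_vertices_base: "a \<in> cube_vertices hs a"
  by (induction hs arbitrary: a) simp_all

lemma cube_vertices_dvd:
  "(\<And>h. h \<in> set hs \<Longrightarrow> d dvd h) \<Longrightarrow> v \<in> cube_vertices hs a \<Longrightarrow> \<exists>t. v = a + t * d"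
proof (induction hs arbitrary: a)
  case (Cons h hs)
  show ?case
  proof (cases "v \<in> cube_vertices hs a")
    case False
    then obtain t where "v = a + h + t * d" using Cons by auto
    moreover have "d dvd h" using Cons.prems(1) by simp
    then obtain k where "h = k * d" by (metis dvdE mult.commute)
    ultimately have "v = a + (k + t) * d" by (simp add: algebra_simps)
    then show ?thesis by blast
  qed (use Cons in auto)
qed simp

lemma cube_vertices_replicate:
  "v \<in> cube_vertices (replicate n h) a \<Longrightarrow> \<exists>m\<le>n. v = a + m * h"
proof (induction n arbitrary: a)
  case (Suc n)
  then have "v \<in> cube_vertices (replicate n h) a \<or> v \<in> cube_vertices (replicate n h) (a + h)"
    by simp
  then show ?case
  proof
    assume "v \<in> cube_vertices (replicate n h) (a + h)"
    then obtain m where "m \<le> n" "v = a + h + m * h" using Suc.IH by blast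
    then show ?thesis by (intro exI[of _ "Suc m"]) simp
  qed (use Suc.IH le_SucI in blast)
qed simp

lemma cube_diff_monomial:
  "i \<le> length hs \<Longrightarrow> cube_diff (\<lambda>n. of_nat n ^ i) hs a =
     (if i = length hs then fact i * prod_list (map of_nat hs) else (0 :: 'a::{comm_ring_1, ring_char_0}))"
proof (induction hs arbitrary: a i)
  case (Cons h hs)
  have binomial: "(of_nat n + of_nat h) ^ i - of_nat n ^ i =
      (\<Sum>l<i. (of_nat (i choose l) * of_nat h ^ (i - l)) * (of_nat n ^ l :: 'a))" for n
  proof -
    have "(of_nat n + of_nat h :: 'a) ^ i =
        (\<Sum>l<i. of_nat (i choose l) * of_nat n ^ l * of_nat h ^ (i - l)) + of_nat n ^ i"
      by (simp add: binomial_ring lessThan_Suc_atMost[symmetric])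
    then show ?thesis by (simp add: algebra_simps)
  qed
  have "cube_diff (\<lambda>n. of_nat n ^ i) (h # hs) a =
      (\<Sum>l<i. (of_nat (i choose l) * of_nat h ^ (i - l)) * cube_diff (\<lambda>n. of_nat n ^ l :: 'a) hs a)"
    unfolding cube_diff_Cons' of_nat_add binomial by (simp add: cube_diff_sum cube_diff_mult_left)
  also have "\<dots> = (\<Sum>l<i. (of_nat (i choose l) * of_nat h ^ (i - l)) *
      (if l = length hs then fact l * prod_list (map of_nat hs) else 0))"
    using Cons.prems by (intro sum.cong refl) (simp add: Cons.IH)
  also have "\<dots> = (if i = length (h # hs) then fact i * prod_list (map of_nat (h # hs)) else 0)"
  proof (cases "i = length (h # hs)")
    case True
    then have "{..<i} = insert (length hs) {..<length hs}" by auto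
    then show ?thesis using True by (simp add: sum.If_cases fact_Suc algebra_simps)
  next
    case False
    then show ?thesis using Cons.prems by (intro trans[OF sum.neutral]) auto
  qed
  finally show ?case .
qed simp

lemma cube_diff_poly:
  fixes P :: "'a::{comm_ring_1, ring_char_0} poly"
  assumes "degree P \<le> length hs"
  shows "cube_diff (\<lambda>n. poly P (of_nat n)) hs a =
    fact (length hs) * coeff P (length hs) * prod_list (map of_nat hs)"
proof -
  have "poly P (of_nat n) = (\<Sum>i\<le>length hs. coeff P i * of_nat n ^ i)" for n
    unfolding poly_altdef by (rule sum.mono_neutral_left) (use assms in \<open>auto simp: coeff_eq_0\<close>)
  then have "cube_diff (\<lambda>n. poly P (of_nat n)) hs a =
      (\<Sum>i\<le>length hs. coeff P i * cube_diff (\<lambda>n. of_nat n ^ i) hs a)"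
    by (simp add: cube_diff_sum cube_diff_mult_left)
  also have "\<dots> = (\<Sum>i\<le>length hs. if i = length hs then coeff P i * (fact i * prod_list (map of_nat hs)) else 0)"
    by (intro sum.cong refl) (simp add: cube_diff_monomial)
  finally show ?thesis by simp
qed

definition near_int :: "real \<Rightarrow> real \<Rightarrow> bool" where
  "near_int E x \<longleftrightarrow> (\<exists>z::int. \<bar>x - of_int z\<bar> \<le> E)"

lemma near_int_mono: "near_int E x \<Longrightarrow> E \<le> E' \<Longrightarrow> near_int E' x"
  unfolding near_int_def using order.trans by blast

lemma near_int_of_abs_le: "\<bar>x\<bar> \<le> E \<Longrightarrow> near_int E x"
  unfolding near_int_def by (intro exI[of _ 0]) simp

lemma near_int_add: "near_int E x \<Longrightarrow> near_int E' y \<Longrightarrow> near_int (E + E') (x + y)"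
  unfolding near_int_def
proof (elim exE)
  fix z z' :: int
  assume "\<bar>x - z\<bar> \<le> E" "\<bar>y - z'\<bar> \<le> E'"
  then show "\<exists>z::int. \<bar>x + y - z\<bar> \<le> E + E'" by (intro exI[of _ "z + z'"]) (simp add: abs_le_iff)
qed

lemma near_int_uminus: "near_int E x \<Longrightarrow> near_int E (- x)"
  unfolding near_int_def
proof (elim exE)
  fix z :: int
  assume "\<bar>x - z\<bar> \<le> E"
  then show "\<exists>z::int. \<bar>- x - z\<bar> \<le> E" by (intro exI[of _ "- z"]) (simp add: abs_le_iff)
qed

lemma near_int_diff: "near_int E x \<Longrightarrow> near_int E' y \<Longrightarrow> near_int (E + E') (x - y)"
  using near_int_add[of E x E' "- y"] near_int_uminus[of E' y] by simp

lemma near_int_add_Ints: "near_int E x \<Longrightarrow> y \<in> \<int> \<Longrightarrow> near_int E (x + y)"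
  using near_int_add[of E x 0 y] by (auto simp: near_int_def elim!: Ints_cases)

lemma cube_diff_near_int:
  "(\<And>v. v \<in> cube_vertices hs a \<Longrightarrow> near_int E (g v)) \<Longrightarrow>
     near_int (2 ^ length hs * E) (cube_diff g hs a)"
proof (induction hs arbitrary: a)
  case (Cons h hs)
  have "near_int (2 ^ length hs * E + 2 ^ length hs * E) (cube_diff g hs (a + h) - cube_diff g hs a)"
    by (rule near_int_diff) (use Cons in auto)
  then show ?case by (simp add: algebra_simps)
qed simp

text \<open>If each \<open>x Q\<^sup>i\<close> is within \<open>E\<close> of an integer \<open>n\<^sub>i\<close>, then \<open>Q n\<^sub>i\<close> and \<open>n\<^sub>i\<^sub>+\<^sub>1\<close> are
  within \<open>(Q + 1) E < 1\<close> of each other, hence equal; so each step divides the error of \<open>x\<close> by \<open>Q\<close>.\<close>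
lemma near_int_descent:
  fixes Q :: nat
  assumes Q: "Q \<ge> 1" and E: "(real Q + 1) * E < 1"
    and near: "\<forall>i\<le>J. near_int E (x * real Q ^ i)"
  shows "near_int (E / real Q ^ J) x"
  using near
proof (induction J arbitrary: x)
  case (Suc J)
  have "\<forall>i\<le>J. near_int E ((x * Q) * real Q ^ i)"
    using Suc.prems by (auto simp: ac_simps)
  then obtain M :: int where M: "\<bar>x * Q - M\<bar> \<le> E / real Q ^ J"
    using Suc.IH unfolding near_int_def by blast
  obtain N :: int where N: "\<bar>x - N\<bar> \<le> E"
    using Suc.prems unfolding near_int_def by fastforce
  have QJ: "real Q ^ J \<ge> 1" using Q by simp
  have "E \<ge> 0" using N by linarith
  then have "E / real Q ^ J \<le> E" using QJ by (simp add: divide_le_eq mult_le_cancel_left1)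
  moreover have "\<bar>real Q * (x - N)\<bar> \<le> real Q * E" using N by (simp add: abs_mult mult_left_mono)
  ultimately have "\<bar>real_of_int (M - int Q * N)\<bar> < 1"
    using M E by (simp add: algebra_simps abs_if split: if_splits)
  then have "M = int Q * N" by linarith
  moreover have "\<bar>x * Q - M\<bar> = real Q * \<bar>x - N\<bar>" if "M = int Q * N"
    using that by (simp add: abs_mult left_diff_distrib[symmetric] mult.commute)
  ultimately have "real Q * \<bar>x - N\<bar> \<le> E / real Q ^ J" using M by simp
  then have "\<bar>x - N\<bar> \<le> E / real Q ^ Suc J" using Q by (simp add: field_simps)
  then show ?case unfolding near_int_def by blast
qed (simp add: near_int_def)

lemma e_add: "e (x + y) = e x * e y"
  by (simp add: e_def distrib_left exp_add)

lemma e_of_int: "e (of_int z) = 1"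
proof -
  have "e (of_int z) = exp (\<i> * (complex_of_int z * (complex_of_real pi * 2)))"
    by (simp add: e_def mult_ac)
  also have "\<dots> = 1" by (rule exp_2pi_1_int)
  finally show ?thesis .
qed

lemma e_eq_iff: "e x = e y \<longleftrightarrow> x - y \<in> \<int>"
proof
  assume "e x = e y"
  moreover have "e x = e (x - y) * e y" by (simp add: e_add[symmetric])
  moreover have "e y \<noteq> 0" by (simp add: e_def)
  ultimately have "exp (2 * pi * \<i> * complex_of_real (x - y)) = 1" by (simp add: e_def)
  then obtain n :: int where "2 * pi * (x - y) = 2 * real_of_int n * pi"
    unfolding exp_eq_1 by auto
  then show "x - y \<in> \<int>" by simp
next
  assume "x - y \<in> \<int>"
  then obtain z where "x = y + of_int z" by (metis Ints_cases add_diff_cancel_left' add_diff_eq)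
  then show "e x = e y" by (simp add: e_add e_of_int)
qed

definition phase :: "complex \<Rightarrow> real" where
  "phase z = Arg z / (2 * pi)"

lemma e_phase: "norm z = 1 \<Longrightarrow> e (phase z) = z"
proof -
  assume z: "norm z = 1"
  have "e (phase z) = exp (\<i> * complex_of_real (Arg z))"
    unfolding e_def phase_def by (simp add: field_simps)
  also have "\<dots> = cis (Arg z)" by (simp add: cis_conv_exp)
  also have "\<dots> = sgn z" using z by (intro cis_Arg) auto
  also have "\<dots> = z" using z by (simp add: sgn_div_norm)
  finally show ?thesis .
qed

lemma e_perturb_iff_near_int:
  assumes "norm z = 1"
  shows "(\<exists>\<theta>. \<bar>\<theta>\<bar> \<le> E \<and> z = e (x + \<theta>)) \<longleftrightarrow> near_int E (x - phase z)"
proof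
  assume "\<exists>\<theta>. \<bar>\<theta>\<bar> \<le> E \<and> z = e (x + \<theta>)"
  then obtain \<theta> where "\<bar>\<theta>\<bar> \<le> E" "e (x + \<theta>) = e (phase z)" using e_phase[OF assms] by auto
  then have "near_int E (- \<theta> + (x + \<theta> - phase z))"
    by (intro near_int_add_Ints near_int_of_abs_le) (simp_all add: e_eq_iff)
  then show "near_int E (x - phase z)" by simp
next
  assume "near_int E (x - phase z)"
  then obtain k :: int where k: "\<bar>x - phase z - k\<bar> \<le> E" unfolding near_int_def by blast
  have "z = e (x + (phase z + k - x))" using e_phase[OF assms] by (simp add: e_add e_of_int)
  then show "\<exists>\<theta>. \<bar>\<theta>\<bar> \<le> E \<and> z = e (x + \<theta>)" using k by (intro exI[of _ "phase z + k - x"]) simp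
qed

section \<open>Binomial polynomials and periodicity modulo 1\<close>

definition binomial_poly :: "nat \<Rightarrow> 'a::field_char_0 poly" where
  "binomial_poly k = smult (1 / fact k) (\<Prod>i<k. [:- of_nat i, 1:])"

lemma poly_binomial_poly: "poly (binomial_poly k) (of_nat n :: 'a::field_char_0) = of_nat (n choose k)"
proof -
  have "poly (binomial_poly k) (of_nat n :: 'a) = (\<Prod>i<k. of_nat n - of_nat i) / fact k"
    by (simp add: binomial_poly_def poly_prod)
  also have "\<dots> = of_nat n gchoose k"
    by (simp add: gbinomial_prod_rev atLeast0LessThan)
  finally show ?thesis by (simp add: binomial_gbinomial)
qed

lemma degree_binomial_poly: "degree (binomial_poly k :: 'a::field_char_0 poly) = k"
  unfolding binomial_poly_def by (subst degree_smult_eq) (simp add: degree_prod_eq_sum_degree)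

lemma coeff_binomial_poly: "coeff (binomial_poly k :: 'a::field_char_0 poly) k = 1 / fact k"
proof -
  have "lead_coeff (\<Prod>i<k. [:- of_nat i, 1:] :: 'a poly) = 1" by (simp add: lead_coeff_prod)
  moreover have "degree (\<Prod>i<k. [:- of_nat i, 1:] :: 'a poly) = k"
    by (simp add: degree_prod_eq_sum_degree)
  ultimately show ?thesis by (simp add: binomial_poly_def)
qed

text \<open>The factor \<open>i \<le> k\<close> can absorb at most \<open>k\<close> factors \<open>q\<close>, since \<open>multiplicity p i < i\<close>.\<close>
lemma power_dvd_of_dvd_small_mult:
  fixes q i Y m k :: nat
  assumes q: "q \<ge> 1" and i: "1 \<le> i" "i \<le> k" and dvd: "q ^ (m + k) dvd i * Y"
  shows "q ^ m dvd Y"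
proof (cases "Y = 0")
  case False
  show ?thesis
  proof (rule multiplicity_le_imp_dvd)
    show "q ^ m \<noteq> 0" using q by simp
    fix p :: nat assume p: "prime p"
    have "multiplicity p (q ^ (m + k)) \<le> multiplicity p (i * Y)"
      using dvd False i by (intro dvd_imp_multiplicity_le) auto
    also have "\<dots> = multiplicity p i + multiplicity p Y"
      using p False i by (simp add: prime_elem_multiplicity_mult_distrib)
    finally have sum: "(m + k) * multiplicity p q \<le> multiplicity p i + multiplicity p Y"
      using p q by (simp add: prime_elem_multiplicity_power_distrib)
    have "2 ^ multiplicity p i \<le> p ^ multiplicity p i"
      using p prime_ge_2_nat power_mono by blast
    also have "\<dots> \<le> i" using i by (intro dvd_imp_le multiplicity_dvd) auto
    finally have "multiplicity p i < i" using less_exp[of "multiplicity p i"] by linarith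
    show "multiplicity p (q ^ m) \<le> multiplicity p Y"
    proof (cases "multiplicity p q = 0")
      case False
      have "(m + k) * multiplicity p q = m * multiplicity p q + k * multiplicity p q"
        by (simp add: algebra_simps)
      moreover have "k \<le> k * multiplicity p q" using False by simp
      ultimately have "m * multiplicity p q \<le> multiplicity p Y"
        using sum i \<open>multiplicity p i < i\<close> by linarith
      then show ?thesis using p q by (simp add: prime_elem_multiplicity_power_distrib)
    qed (use p q in \<open>simp add: prime_elem_multiplicity_power_distrib\<close>)
  qed
qed simp

lemma dvd_binomial_shift_diff:
  fixes q :: nat assumes q: "q \<ge> 1"
  shows "q ^ m dvd ((n + w * q ^ (m + k)) choose k) - (n choose k)"
proof -
  let ?X = "w * q ^ (m + k)"
  have "(n + ?X) choose k = (\<Sum>i\<le>k. (?X choose i) * (n choose (k - i)))"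
    by (subst add.commute) (rule vandermonde[symmetric])
  also have "\<dots> = (n choose k) + (\<Sum>i\<in>{1..k}. (?X choose i) * (n choose (k - i)))"
    by (simp add: atMost_atLeast0 sum.atLeast_Suc_atMost)
  finally have diff: "((n + ?X) choose k) - (n choose k) = (\<Sum>i\<in>{1..k}. (?X choose i) * (n choose (k - i)))"
    by simp
  have "q ^ m dvd (?X choose i)" if i: "i \<in> {1..k}" for i
  proof (rule power_dvd_of_dvd_small_mult[OF q])
    have "i * (?X choose i) = ?X * (?X - 1 choose (i - 1))"
      using i by (intro times_binomial_minus1_eq) auto
    then show "q ^ (m + k) dvd i * (?X choose i)" by simp
  qed (use i in auto)
  then show ?thesis unfolding diff by (intro dvd_sum dvd_mult2) auto
qed

definition periodic_mod_Ints :: "(nat \<Rightarrow> 'a::ring_1) \<Rightarrow> nat \<Rightarrow> bool" where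
  "periodic_mod_Ints g T \<longleftrightarrow> (\<forall>n t. g (n + t * T) - g n \<in> \<int>)"

lemma periodic_mod_Ints_add:
  "periodic_mod_Ints g T \<Longrightarrow> periodic_mod_Ints g' T \<Longrightarrow> periodic_mod_Ints (\<lambda>n. g n + g' n) T"
  unfolding periodic_mod_Ints_def by (metis (no_types) Ints_add add_diff_add)

lemma periodic_mod_Ints_power_mono:
  assumes "periodic_mod_Ints g (q ^ K)" and "K \<le> K'"
  shows "periodic_mod_Ints g (q ^ K')"
  unfolding periodic_mod_Ints_def
proof (intro allI)
  fix n t
  have "t * q ^ K' = (t * q ^ (K' - K)) * q ^ K"
    using assms(2) by (simp add: power_add[symmetric])
  then show "g (n + t * q ^ K') - g n \<in> \<int>"
    using assms(1) unfolding periodic_mod_Ints_def by metis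
qed

lemma periodic_mod_Ints_frac:
  fixes g :: "nat \<Rightarrow> 'a::floor_ceiling"
  assumes "periodic_mod_Ints g T"
  shows "frac (g (n + T)) = frac (g n)"
proof -
  obtain w where "g (n + 1 * T) - g n = of_int w"
    using assms unfolding periodic_mod_Ints_def by (blast elim: Ints_cases)
  then have "g (n + T) = g n + of_int w" by (simp add: algebra_simps)
  then show ?thesis by (simp add: frac_add_of_int_right)
qed

lemma periodic_mod_Ints_binomial_poly:
  fixes q :: nat assumes q: "q \<ge> 1"
  shows "periodic_mod_Ints (\<lambda>n. poly (smult (of_int N / of_nat (q ^ m)) (binomial_poly k)) (of_nat n) :: 'a::field_char_0)
           (q ^ (m + k))"
  unfolding periodic_mod_Ints_def poly_smult
proof (intro allI)
  fix n t
  obtain d where d: "((n + t * q ^ (m + k)) choose k) - (n choose k) = q ^ m * d"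
    using dvd_binomial_shift_diff[OF q, of m n t k] by (auto elim: dvdE)
  have "(n choose k) \<le> ((n + t * q ^ (m + k)) choose k)" by (rule binomial_right_mono) simp
  have "of_int N / of_nat (q ^ m) * poly (binomial_poly k) (of_nat (n + t * q ^ (m + k))) -
        of_int N / of_nat (q ^ m) * poly (binomial_poly k) (of_nat n) =
      (of_int N / of_nat (q ^ m) * (of_nat ((n + t * q ^ (m + k)) choose k) - of_nat (n choose k)) :: 'a)"
    by (simp only: poly_binomial_poly right_diff_distrib)
  also have "\<dots> = of_int N / of_nat (q ^ m) * of_nat (q ^ m * d)"
    using d \<open>(n choose k) \<le> _\<close> by (simp add: of_nat_diff[symmetric])
  also have "\<dots> = of_int (N * int d)" using q by simp
  finally show "of_int N / of_nat (q ^ m) * poly (binomial_poly k) (of_nat (n + t * q ^ (m + k))) -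
        of_int N / of_nat (q ^ m) * poly (binomial_poly k) (of_nat n) \<in> (\<int> :: 'a set)"
    by (metis Ints_of_int)
qed

section \<open>Digit cubes\<close>

text \<open>If the \<open>j\<close>-th digit of \<open>a\<close> vanishes, it vanishes at every vertex of the face spanned by
  the steps \<open>q\<^sup>j\<^sup>+\<^sup>1\<close>, so there \<open>q\<close>-multiplicativity splits off the step \<open>q\<^sup>j\<close>.\<close>
definition digit_cube :: "nat \<Rightarrow> nat \<Rightarrow> nat \<Rightarrow> nat list" where
  "digit_cube q r j = q ^ j # replicate (r - 1) (q ^ Suc j)"

lemma length_digit_cube: "r \<ge> 1 \<Longrightarrow> length (digit_cube q r j) = r"
  by (simp add: digit_cube_def)

lemma prod_list_digit_cube:
  assumes "r \<ge> 1"
  shows "prod_list (map of_nat (digit_cube q r j)) = (of_nat q ^ (r * j + r - 1) :: 'a::comm_semiring_1)"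
proof -
  have "prod_list (map of_nat (digit_cube q r j)) = (of_nat q ^ j * (of_nat q ^ Suc j) ^ (r - 1) :: 'a)"
    by (simp add: digit_cube_def map_replicate_const prod_list_replicate)
  also have "\<dots> = of_nat q ^ (j + Suc j * (r - 1))" by (simp only: power_add power_mult)
  also have "j + Suc j * (r - 1) = r * j + r - 1" using assms by (cases r) (auto simp: algebra_simps)
  finally show ?thesis .
qed

lemma power_dvd_digit_cube: "K \<le> j \<Longrightarrow> h \<in> set (digit_cube q r j) \<Longrightarrow> q ^ K dvd h"
  by (auto simp: digit_cube_def le_imp_power_dvd)

lemma digit_cube_vertex:
  assumes "r \<ge> 1" and "v \<in> cube_vertices (digit_cube q r j) a"
  shows "\<exists>e m. e < 2 \<and> m < r \<and> v = a + e * q ^ j + m * q ^ Suc j"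
proof -
  let ?hs = "replicate (r - 1) (q ^ Suc j)"
  from assms(2) consider "v \<in> cube_vertices ?hs a" | "v \<in> cube_vertices ?hs (a + q ^ j)"
    by (auto simp: digit_cube_def)
  then show ?thesis
  proof cases
    case 1
    then obtain m where "m \<le> r - 1" "v = a + m * q ^ Suc j" using cube_vertices_replicate by blast
    then show ?thesis using assms(1) by (intro exI[of _ 0] exI[of _ m]) auto
  next
    case 2
    then obtain m where "m \<le> r - 1" "v = a + q ^ j + m * q ^ Suc j" using cube_vertices_replicate by blast
    then show ?thesis using assms(1) by (intro exI[of _ 1] exI[of _ m]) auto
  qed
qed

lemma q_multiplicative_add_digit:
  assumes f: "q_multiplicative q f" and q: "q \<ge> 2" and v: "v mod q ^ Suc j < q ^ j"
  shows "f (v + q ^ j) = f v * f (q ^ j)"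
proof -
  define u where "u = v mod q ^ Suc j"
  define w where "w = q ^ Suc j * (v div q ^ Suc j)"
  have split: "\<And>t m n. m < q ^ t \<Longrightarrow> q ^ t dvd n \<Longrightarrow> f (m + n) = f m * f n"
    using f unfolding q_multiplicative_def by blast
  have u: "u < q ^ j" using v by (simp add: u_def)
  have qj: "q ^ j < q ^ Suc j" using q by simp
  have vuw: "v = u + w" by (simp add: u_def w_def)
  have "f (v + q ^ j) = f (u + (q ^ j + w))" by (simp add: vuw ac_simps)
  also have "\<dots> = f u * f (q ^ j + w)" by (rule split[OF u]) (simp add: w_def)
  also have "f (q ^ j + w) = f (q ^ j) * f w" by (rule split[OF qj]) (simp add: w_def)
  also have "f v = f u * f w" unfolding vuw
    by (rule split[of _ "Suc j"]) (use u qj w_def in \<open>auto simp del: power_Suc\<close>)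
  ultimately show ?thesis by (simp add: mult_ac)
qed

text \<open>Along the first step the phase of \<open>f\<close> is additive up to integers, so the phase of \<open>f\<close>
  has integral cube differences and \<open>g\<close> inherits the error of the phase approximation.\<close>
lemma near_int_cube_diff_digit_cube:
  assumes f: "q_multiplicative q f" "\<forall>n. norm (f n) = 1" and q: "q \<ge> 2" and r: "r \<ge> 2"
    and a: "a mod q ^ Suc j < q ^ j"
    and good: "\<forall>v\<in>cube_vertices (digit_cube q r j) a. near_int \<epsilon> (g v - phase (f v))"
  shows "near_int (2 ^ r * \<epsilon>) (cube_diff g (digit_cube q r j) a)"
proof -
  define hs where "hs = replicate (r - 1) (q ^ Suc j)"
  have cube: "digit_cube q r j = q ^ j # hs" by (simp add: digit_cube_def hs_def)
  have "hs \<noteq> []" using r by (simp add: hs_def)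
  have "(phase (f (v + q ^ j)) - phase (f v)) - phase (f (q ^ j)) \<in> \<int>"
    if v: "v \<in> cube_vertices hs a" for v
  proof -
    have "q ^ Suc j dvd h" if "h \<in> set hs" for h using that by (simp add: hs_def)
    then obtain t where "v = a + t * q ^ Suc j" using cube_vertices_dvd v by blast
    then have "v mod q ^ Suc j < q ^ j" using a by simp
    then have "f v * f (q ^ j) = f (v + q ^ j)" by (rule q_multiplicative_add_digit[OF f(1) q, symmetric])
    then have "e (phase (f (v + q ^ j))) = e (phase (f v) + phase (f (q ^ j)))"
      using f(2) by (simp add: e_add e_phase)
    then show ?thesis by (simp add: e_eq_iff diff_diff_eq)
  qed
  then have phase_Ints: "cube_diff (\<lambda>n. phase (f n)) (digit_cube q r j) a \<in> \<int>"
    unfolding cube cube_diff_Cons' by (rule cube_diff_Ints_of_diff_Ints[OF \<open>hs \<noteq> []\<close>])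
  have "near_int (2 ^ r * \<epsilon>) (cube_diff (\<lambda>n. g n - phase (f n)) (digit_cube q r j) a)"
    using cube_diff_near_int[of "digit_cube q r j" a \<epsilon>] good r by (simp add: length_digit_cube)
  then have "near_int (2 ^ r * \<epsilon>) (cube_diff (\<lambda>n. g n - phase (f n)) (digit_cube q r j) a +
      cube_diff (\<lambda>n. phase (f n)) (digit_cube q r j) a)"
    using phase_Ints by (rule near_int_add_Ints)
  then show ?thesis by (simp add: cube_diff_diff)
qed

lemma exists_translates_avoiding:
  fixes A D Bad :: "nat set"
  assumes "finite A" "finite D" "finite Bad" and "card D * card Bad < card A"
  shows "\<exists>a\<in>A. \<forall>t\<in>D. a + t \<notin> Bad"
proof -
  let ?U = "\<Union>t\<in>D. {a\<in>A. a + t \<in> Bad}"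
  have each: "card {a\<in>A. a + t \<in> Bad} \<le> card Bad" for t
  proof -
    have "inj_on (\<lambda>a. a + t) {a\<in>A. a + t \<in> Bad}" by (rule inj_onI) simp
    moreover have "(\<lambda>a. a + t) ` {a\<in>A. a + t \<in> Bad} \<subseteq> Bad" by blast
    ultimately show ?thesis using \<open>finite Bad\<close> by (rule card_inj_on_le)
  qed
  have "card ?U \<le> (\<Sum>t\<in>D. card {a\<in>A. a + t \<in> Bad})"
    by (rule card_UN_le) (rule \<open>finite D\<close>)
  also have "\<dots> \<le> card D * card Bad"
    using sum_bounded_above[of D "\<lambda>t. card {a\<in>A. a + t \<in> Bad}" "card Bad"] each by simp
  finally have "card ?U < card A" using assms(4) by linarith
  moreover have "?U \<subseteq> A" by blast
  ultimately have "\<not> A \<subseteq> ?U" using card_mono[OF \<open>finite A\<close>, of ?U] by auto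
  then show ?thesis by blast
qed

lemma double_le_power:
  fixes q r T :: nat
  assumes "q \<ge> 2" and "1 \<le> r" and "r \<le> T"
  shows "2 * r \<le> q ^ T"
proof -
  have "2 * r \<le> 2 ^ r" using assms(2)
  proof (induction r rule: dec_induct)
    case (step n)
    then show ?case by simp
  qed simp
  also have "(2::nat) ^ r \<le> 2 ^ T" using assms(3) by (intro power_increasing) auto
  also have "(2::nat) ^ T \<le> q ^ T" using assms(1) by (intro power_mono) auto
  finally show ?thesis .
qed

lemma card_digit_window:
  assumes "q \<ge> 2"
  shows "card ((\<lambda>(x, y). x + y * q ^ Suc j) ` ({..<q ^ j} \<times> {..<W})) = q ^ j * W"
proof -
  have "q ^ j < q ^ Suc j" "q ^ Suc j \<noteq> 0" using assms by simp_all
  then have digits: "(x + y * q ^ Suc j) mod q ^ Suc j = x" "(x + y * q ^ Suc j) div q ^ Suc j = y"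
    if "x < q ^ j" for x y
    using that by (simp_all del: power_Suc)
  have "inj_on (\<lambda>(x, y). x + y * q ^ Suc j) ({..<q ^ j} \<times> {..<W})"
  proof (rule inj_onI)
    fix u u' assume "u \<in> {..<q ^ j} \<times> {..<W}" "u' \<in> {..<q ^ j} \<times> {..<W}"
      and "(\<lambda>(x, y). x + y * q ^ Suc j) u = (\<lambda>(x, y). x + y * q ^ Suc j) u'"
    then show "u = u'"
      using digits[of "fst u" "snd u"] digits[of "fst u'" "snd u'"] by (cases u, cases u') auto
  qed
  then show ?thesis by (simp add: card_image card_cartesian_product)
qed

lemma digit_cube_vertex_less:
  assumes q: "q \<ge> 2" and r: "r \<ge> 1" and x: "x < q ^ j" and y: "y + r \<le> q ^ T"
    and v: "v \<in> cube_vertices (digit_cube q r j) (x + y * q ^ Suc j)"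
  shows "v < q ^ (Suc j + T)"
proof -
  obtain e m where em: "e < 2" "m < r" "v = x + e * q ^ j + (y + m) * q ^ Suc j"
    using digit_cube_vertex[OF r v] by (auto simp: algebra_simps)
  have "2 * q ^ j \<le> q * q ^ j" using q by (intro mult_right_mono) auto
  moreover have "e * q ^ j \<le> 1 * q ^ j" using em(1) by (intro mult_le_mono1) simp
  ultimately have "x + e * q ^ j < q ^ Suc j" using x by (simp only: power_Suc)
  then have "v < (y + m + 1) * q ^ Suc j" using em(3) by simp
  also have "\<dots> \<le> q ^ T * q ^ Suc j" using em(2) y by (intro mult_le_mono1) linarith
  finally show ?thesis by (simp add: power_add mult_ac)
qed

text \<open>Take as base points the numbers \<open>x + y q\<^sup>j\<^sup>+\<^sup>1\<close> with \<open>x < q\<^sup>j\<close> and \<open>y < q\<^sup>L\<^sup>-\<^sup>j\<^sup>-\<^sup>1 - r + 1\<close>: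
  there are more than \<open>q\<^sup>L\<^sup>-\<^sup>1 / 2\<close> of them, their cubes fit into \<open>[0, q\<^sup>L)\<close>, and each of the
  \<open>2r\<close> vertex offsets moves at most \<open>|Bad|\<close> of them into \<open>Bad\<close>.\<close>
lemma exists_digit_cube_avoiding:
  fixes Bad :: "nat set"
  assumes q: "q \<ge> 2" and r: "r \<ge> 1" and L: "j + 1 + r \<le> L" and "finite Bad"
    and small: "4 * r * q * card Bad < q ^ L"
  shows "\<exists>a. a mod q ^ Suc j < q ^ j \<and> (\<forall>v\<in>cube_vertices (digit_cube q r j) a. v < q ^ L \<and> v \<notin> Bad)"
proof -
  define T where "T = L - Suc j"
  define W where "W = q ^ T - (r - 1)"
  have LT: "L = Suc j + T" using L by (simp add: T_def)
  have "2 * r \<le> q ^ T" using q r L by (intro double_le_power) (auto simp: T_def)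
  then have W: "q ^ T = W + (r - 1)" "q ^ T < 2 * W" using r by (simp_all add: W_def)
  define A where "A = (\<lambda>(x, y). x + y * q ^ Suc j) ` ({..<q ^ j} \<times> {..<W})"
  define D where "D = (\<lambda>(e, m). e * q ^ j + m * q ^ Suc j) ` ({..<2} \<times> {..<r})"
  have "card D \<le> 2 * r"
    unfolding D_def using card_image_le[of "{..<2::nat} \<times> {..<r}"] by (simp add: card_cartesian_product)
  moreover have "q * (2 * (2 * r * card Bad)) < q * (2 * (q ^ j * W))"
  proof -
    have "q * (2 * (2 * r * card Bad)) < q ^ L" using small by (simp add: mult_ac)
    also have "\<dots> = q * (q ^ j * q ^ T)" by (simp add: LT power_add)
    also have "\<dots> < q * (2 * (q ^ j * W))" using q W(2) by simp
    finally show ?thesis .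
  qed
  then have "2 * r * card Bad < card A" using card_digit_window[OF q] by (simp add: A_def mult_ac)
  ultimately have "card D * card Bad < card A"
    using mult_le_mono1[of "card D" "2 * r" "card Bad"] by linarith
  moreover have "finite A" "finite D" by (simp_all add: A_def D_def)
  ultimately obtain a where "a \<in> A" and avoid: "\<forall>t\<in>D. a + t \<notin> Bad"
    using exists_translates_avoiding[OF _ _ \<open>finite Bad\<close>] by blast
  then obtain x y where xy: "x < q ^ j" "y < W" "a = x + y * q ^ Suc j" unfolding A_def by auto
  have "v < q ^ L \<and> v \<notin> Bad" if v: "v \<in> cube_vertices (digit_cube q r j) a" for v
  proof
    show "v < q ^ L" using digit_cube_vertex_less[OF q r xy(1) _ v[unfolded xy(3)]] W(1) xy(2) LT by simp
    obtain e m where em: "e < 2" "m < r" "v = a + e * q ^ j + m * q ^ Suc j"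
      using digit_cube_vertex[OF r v] by blast
    then have "e * q ^ j + m * q ^ Suc j \<in> D"
      unfolding D_def by (intro image_eqI[of _ _ "(e, m)"]) simp_all
    then show "v \<notin> Bad" using avoid em(3) by (simp add: add.assoc)
  qed
  moreover have "q ^ j < q ^ Suc j" using q by simp
  then have "x < q ^ Suc j" using xy(1) by linarith
  then have "a mod q ^ Suc j < q ^ j" using xy by simp
  ultimately show ?thesis by blast
qed

section \<open>Lowering the degree\<close>

definition near_int_cubes :: "nat \<Rightarrow> real poly \<Rightarrow> real \<Rightarrow> nat \<Rightarrow> nat \<Rightarrow> nat \<Rightarrow> bool" where
  "near_int_cubes q P E K L k \<longleftrightarrow> (\<forall>r j. 2 \<le> r \<and> r \<le> k \<and> K \<le> j \<and> j + 1 + r \<le> L \<longrightarrow>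
     (\<exists>a. (\<forall>v\<in>cube_vertices (digit_cube q r j) a. v < q ^ L) \<and>
          near_int E (cube_diff (\<lambda>n. poly P (real n)) (digit_cube q r j) a)))"

definition periodic_approx :: "nat \<Rightarrow> real poly \<Rightarrow> real \<Rightarrow> nat \<Rightarrow> nat \<Rightarrow> bool" where
  "periodic_approx q P B L K \<longleftrightarrow> (\<exists>\<alpha> \<beta> (b :: rat poly). periodic_mod_Ints (\<lambda>n. poly b (of_nat n)) (q ^ K) \<and>
      (\<forall>n<q ^ L. near_int B (poly P (real n) - \<alpha> * real n - \<beta> - real_of_rat (poly b (of_nat n)))))"

lemma periodic_approx_degree_le_1:
  assumes "degree P \<le> 1" and "0 \<le> B"
  shows "periodic_approx q P B L K"
proof -
  have "poly P (real n) = coeff P 0 + coeff P 1 * real n" for n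
    using assms(1) by (simp add: poly_altdef atMost_Suc) (cases "degree P"; simp add: coeff_eq_0)
  then have "\<forall>n<q ^ L. near_int B (poly P (real n) - coeff P 1 * real n - coeff P 0 - real_of_rat (poly 0 (of_nat n)))"
    using assms(2) by (simp add: near_int_of_abs_le)
  moreover have "periodic_mod_Ints (\<lambda>n. poly (0 :: rat poly) (of_nat n)) (q ^ K)"
    by (simp add: periodic_mod_Ints_def)
  ultimately show ?thesis unfolding periodic_approx_def by blast
qed

lemma periodic_approx_mono: "periodic_approx q P B L K \<Longrightarrow> B \<le> B' \<Longrightarrow> periodic_approx q P B' L K"
  unfolding periodic_approx_def using near_int_mono by blast

lemma periodic_approx_add:
  fixes b :: "rat poly"
  assumes "periodic_approx q P B L K"
    and "periodic_mod_Ints (\<lambda>n. poly b (of_nat n)) (q ^ K)"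
    and "\<And>n. poly R (real n) = real_of_rat (poly b (of_nat n))"
    and "\<forall>n<q ^ L. \<bar>poly S (real n)\<bar> \<le> D"
  shows "periodic_approx q (P + R + S) (B + D) L K"
proof -
  obtain \<alpha> \<beta> b' where b': "periodic_mod_Ints (\<lambda>n. poly b' (of_nat n :: rat)) (q ^ K)"
    and approx: "\<forall>n<q ^ L. near_int B (poly P (real n) - \<alpha> * real n - \<beta> - real_of_rat (poly b' (of_nat n)))"
    using assms(1) unfolding periodic_approx_def by blast
  have "periodic_mod_Ints (\<lambda>n. poly (b' + b) (of_nat n)) (q ^ K)"
    using periodic_mod_Ints_add[OF b' assms(2)] by simp
  moreover have "near_int (B + D) (poly (P + R + S) (real n) - \<alpha> * real n - \<beta> - real_of_rat (poly (b' + b) (of_nat n)))"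
    if "n < q ^ L" for n
  proof -
    have "near_int B (poly P (real n) - \<alpha> * real n - \<beta> - real_of_rat (poly b' (of_nat n)))"
      using that approx by blast
    moreover have "near_int D (poly S (real n))" using that assms(4) near_int_of_abs_le by blast
    ultimately have "near_int (B + D) ((poly P (real n) - \<alpha> * real n - \<beta> - real_of_rat (poly b' (of_nat n))) +
        poly S (real n))"
      by (rule near_int_add)
    then show ?thesis by (simp add: assms(3) of_rat_add algebra_simps)
  qed
  ultimately show ?thesis unfolding periodic_approx_def by blast
qed

lemma near_int_cubes_diff:
  assumes H: "near_int_cubes q P E K L k" and "K \<le> K'" and "k' \<le> k"
    and R: "periodic_mod_Ints (\<lambda>n. poly R (real n)) (q ^ K')"
    and S: "\<forall>n<q ^ L. \<bar>poly S (real n)\<bar> \<le> D"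
  shows "near_int_cubes q (P - R - S) (E + 2 ^ k * D) K' L k'"
  unfolding near_int_cubes_def
proof (intro allI impI)
  fix r j assume rj: "2 \<le> r \<and> r \<le> k' \<and> K' \<le> j \<and> j + 1 + r \<le> L"
  let ?hs = "digit_cube q r j"
  obtain a where a: "\<forall>v\<in>cube_vertices ?hs a. v < q ^ L"
    and P: "near_int E (cube_diff (\<lambda>n. poly P (real n)) ?hs a)"
    using H rj assms(2,3) unfolding near_int_cubes_def by (meson order.trans)
  have "poly R (real v) - poly R (real a) \<in> \<int>" if v: "v \<in> cube_vertices ?hs a" for v
  proof -
    have "q ^ K' dvd h" if "h \<in> set ?hs" for h using power_dvd_digit_cube[OF _ that] rj by blast
    then obtain t where "v = a + t * q ^ K'" using cube_vertices_dvd v by blast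
    then show ?thesis using R unfolding periodic_mod_Ints_def by simp
  qed
  then have R_Ints: "cube_diff (\<lambda>n. poly R (real n)) ?hs a \<in> \<int>"
    by (intro cube_diff_Ints_of_diff_Ints) (auto simp: digit_cube_def)
  have "near_int (2 ^ r * D) (cube_diff (\<lambda>n. poly S (real n)) ?hs a)"
    using cube_diff_near_int[of ?hs a D "\<lambda>n. poly S (real n)"] a S rj
    by (simp add: length_digit_cube near_int_of_abs_le)
  moreover have "(2::real) ^ r * D \<le> 2 ^ k * D"
  proof (rule mult_right_mono)
    show "(2::real) ^ r \<le> 2 ^ k" using rj assms(3) by (intro power_increasing) auto
    show "0 \<le> D" using S a cube_vertices_base[of a ?hs] by (meson abs_ge_zero order.trans)
  qed
  ultimately have S_near: "near_int (2 ^ k * D) (cube_diff (\<lambda>n. poly S (real n)) ?hs a)"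
    by (rule near_int_mono)
  have "near_int (E + 2 ^ k * D) ((cube_diff (\<lambda>n. poly P (real n)) ?hs a -
      cube_diff (\<lambda>n. poly S (real n)) ?hs a) + - cube_diff (\<lambda>n. poly R (real n)) ?hs a)"
    using near_int_diff[OF P S_near] Ints_minus[OF R_Ints] by (rule near_int_add_Ints)
  then show "\<exists>a. (\<forall>v\<in>cube_vertices ?hs a. v < q ^ L) \<and>
      near_int (E + 2 ^ k * D) (cube_diff (\<lambda>n. poly (P - R - S) (real n)) ?hs a)"
    using a by (auto simp: cube_diff_diff cube_diff_add algebra_simps)
qed

lemma near_int_cubes_leading_term:
  assumes k: "k \<ge> 2" and P: "degree P \<le> k" and H: "near_int_cubes q P E K L k"
    and L: "K + i + 1 + k \<le> L"
  shows "near_int E (coeff P k * (fact k * real q ^ (k - 1 + k * K)) * real (q ^ k) ^ i)"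
proof -
  have "2 \<le> k \<and> k \<le> k \<and> K \<le> K + i \<and> K + i + 1 + k \<le> L" using k L by simp
  then obtain a where "near_int E (cube_diff (\<lambda>n. poly P (real n)) (digit_cube q k (K + i)) a)"
    using H unfolding near_int_cubes_def by blast
  moreover have "cube_diff (\<lambda>n. poly P (real n)) (digit_cube q k (K + i)) a =
      fact k * coeff P k * real q ^ (k * (K + i) + k - 1)"
    using cube_diff_poly[of P "digit_cube q k (K + i)" a] P k
    by (simp add: length_digit_cube prod_list_digit_cube)
  moreover have "k * (K + i) + k - 1 = (k - 1 + k * K) + k * i" using k by (simp add: algebra_simps)
  moreover have "real (q ^ k) ^ i = real q ^ (k * i)" by (simp add: power_mult)
  ultimately show ?thesis by (simp add: power_add mult_ac)
qed

text \<open>Passing to the next scale multiplies the \<open>k\<close>-th difference \<open>Z = k! q\<^sup>m c\<close> by \<open>q\<^sup>k\<close>, so the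
  descent lemma pins \<open>Z\<close> to an integer with an error small enough to beat \<open>n\<^sup>k\<close> on \<open>[0, q\<^sup>L)\<close>.\<close>
lemma leading_coeff_near_rational:
  assumes q: "q \<ge> 2" and k: "k \<ge> 2" and P: "degree P \<le> k"
    and E: "(real q ^ k + 1) * E < 1" and L: "K + k + 1 \<le> L"
    and H: "near_int_cubes q P E K L k"
  obtains N :: int where
    "\<bar>coeff P k - of_int N / (fact k * real q ^ (k - 1 + k * K))\<bar> * real q ^ (k * L)
       \<le> E * real q ^ (k\<^sup>2 + 1)"
proof -
  define m where "m = k - 1 + k * K"
  define J where "J = L - 1 - k - K"
  define F :: real where "F = fact k * real q ^ m"
  define Z where "Z = coeff P k * F"
  have "\<forall>i\<le>J. near_int E (Z * real (q ^ k) ^ i)"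
    using near_int_cubes_leading_term[OF k P H] L by (auto simp: Z_def F_def m_def J_def)
  moreover have "(real (q ^ k) + 1) * E < 1" using E by simp
  ultimately obtain N :: int where N: "\<bar>Z - N\<bar> \<le> E / real (q ^ k) ^ J"
    using near_int_descent[of "q ^ k" E J Z] q unfolding near_int_def by auto
  have "F > 0" using q by (simp add: F_def)
  have "0 \<le> E / real (q ^ k) ^ J" using N abs_ge_zero order.trans by blast
  moreover have "(real q ^ k) ^ J > 0" using q by simp
  ultimately have E0: "E \<ge> 0" by (simp add: zero_le_divide_iff)
  have "coeff P k - N / F = (Z - N) / F" using \<open>F > 0\<close> by (simp add: Z_def field_simps)
  then have "\<bar>coeff P k - N / F\<bar> = \<bar>Z - N\<bar> / F" using \<open>F > 0\<close> by (simp add: abs_divide)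
  moreover have "L = J + 1 + k + K" using L by (simp add: J_def)
  then have "k * L = k * J + m + (k\<^sup>2 + 1)"
    using k unfolding m_def by (cases k) (simp_all add: power2_eq_square algebra_simps)
  then have "real q ^ (k * L) = real (q ^ k) ^ J * real q ^ m * real q ^ (k\<^sup>2 + 1)"
    by (simp add: power_add power_mult)
  ultimately have "\<bar>coeff P k - N / F\<bar> * real q ^ (k * L) =
      (\<bar>Z - N\<bar> * real (q ^ k) ^ J) * (real q ^ (k\<^sup>2 + 1) / fact k)"
    using q by (simp add: F_def field_simps)
  also have "\<dots> \<le> E * (real q ^ (k\<^sup>2 + 1) / fact k)"
    using N q by (intro mult_right_mono) (simp_all add: pos_le_divide_eq)
  also have "\<dots> \<le> E * real q ^ (k\<^sup>2 + 1)"
  proof (rule mult_left_mono[OF _ E0])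
    have "real q ^ (k\<^sup>2 + 1) * 1 \<le> real q ^ (k\<^sup>2 + 1) * fact k"
      by (intro mult_left_mono) (simp_all add: fact_ge_1)
    then show "real q ^ (k\<^sup>2 + 1) / fact k \<le> real q ^ (k\<^sup>2 + 1)" by (simp add: divide_le_eq)
  qed
  finally show ?thesis using that by (simp add: F_def m_def)
qed

lemma degree_diff_monom_le:
  fixes P R :: "'a::comm_ring_1 poly"
  assumes "degree P \<le> k" and "degree R \<le> k" and "coeff P k = coeff R k + \<eta>"
  shows "degree (P - R - monom \<eta> k) \<le> k - 1"
proof (rule degree_le, intro allI impI)
  fix i assume "k - 1 < i"
  then consider "i = k" | "k < i" by linarith
  then show "coeff (P - R - monom \<eta> k) i = 0"
    by cases (use assms in \<open>simp_all add: coeff_monom coeff_eq_0\<close>)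
qed

text \<open>The rational part of the leading coefficient is realised by a multiple of \<open>binomial n k\<close>,
  which is periodic modulo \<open>\<int>\<close>; the remainder \<open>\<eta> n\<^sup>k\<close> is uniformly small on \<open>[0, q\<^sup>L)\<close>.
  Subtracting both lowers the degree and keeps the cube condition at a coarser scale.\<close>
lemma periodic_approx_step:
  assumes q: "q \<ge> 2" and k: "k \<ge> 2" and P: "degree P \<le> k"
    and E: "(real q ^ k + 1) * E < 1" and L: "K + k + 1 \<le> L"
    and H: "near_int_cubes q P E K L k" and K': "k - 1 + k * K + k \<le> K'"
    and IH: "\<And>P'. degree P' \<le> k - 1 \<Longrightarrow>
      near_int_cubes q P' ((1 + 2 ^ k * real q ^ (k\<^sup>2 + 1)) * E) (k - 1 + k * K + k) L (k - 1) \<Longrightarrow>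
      periodic_approx q P' B L K'"
  shows "periodic_approx q P (B + real q ^ (k\<^sup>2 + 1) * E) L K'"
proof -
  define m where "m = k - 1 + k * K"
  define D where "D = real q ^ (k\<^sup>2 + 1) * E"
  obtain N :: int where N: "\<bar>coeff P k - N / (fact k * real q ^ m)\<bar> * real q ^ (k * L) \<le> D"
    using leading_coeff_near_rational[OF q k P E L H] unfolding m_def D_def by (metis mult.commute)
  define \<eta> where "\<eta> = coeff P k - N / (fact k * real q ^ m)"
  define b :: "rat poly" where "b = smult (of_int N / of_nat (q ^ m)) (binomial_poly k)"
  define R :: "real poly" where "R = smult (of_int N / of_nat (q ^ m)) (binomial_poly k)"
  define S where "S = monom \<eta> k"
  have R_b: "poly R (real n) = real_of_rat (poly b (of_nat n))" for n
    by (simp add: R_def b_def poly_binomial_poly of_rat_mult of_rat_divide of_rat_power)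
  have S: "\<forall>n<q ^ L. \<bar>poly S (real n)\<bar> \<le> D"
  proof (intro allI impI)
    fix n assume "n < q ^ L"
    then have "real n ^ k \<le> real q ^ (k * L)"
      by (simp add: power_mult mult.commute[of k] power_mono less_imp_le del: of_nat_power)
    then have "\<bar>\<eta>\<bar> * real n ^ k \<le> \<bar>\<eta>\<bar> * real q ^ (k * L)" by (rule mult_left_mono) simp
    then show "\<bar>poly S (real n)\<bar> \<le> D" using N by (simp add: S_def poly_monom abs_mult \<eta>_def)
  qed
  have R_periodic: "periodic_mod_Ints (\<lambda>n. poly R (real n)) (q ^ (m + k))"
    unfolding R_def by (rule periodic_mod_Ints_binomial_poly) (use q in simp)
  have b_periodic: "periodic_mod_Ints (\<lambda>n. poly b (of_nat n)) (q ^ K')"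
    unfolding b_def by (rule periodic_mod_Ints_power_mono[OF periodic_mod_Ints_binomial_poly])
      (use q K' in \<open>simp_all add: m_def\<close>)
  have "coeff R k = N / real q ^ m / fact k" by (simp add: R_def coeff_binomial_poly)
  then have "coeff P k = coeff R k + \<eta>" by (simp add: \<eta>_def field_simps)
  moreover have "degree R \<le> k"
    using degree_smult_le[of _ "binomial_poly k :: real poly"] by (simp add: R_def degree_binomial_poly)
  ultimately have "degree (P - R - S) \<le> k - 1" unfolding S_def by (intro degree_diff_monom_le P)
  moreover have "1 * K \<le> k * K" using k by (intro mult_le_mono1) simp
  then have "K \<le> m + k" unfolding m_def by linarith
  then have "near_int_cubes q (P - R - S) (E + 2 ^ k * D) (m + k) L (k - 1)"
    by (rule near_int_cubes_diff[OF H _ _ R_periodic S]) simp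
  moreover have "E + 2 ^ k * D = (1 + 2 ^ k * real q ^ (k\<^sup>2 + 1)) * E" by (simp add: D_def algebra_simps)
  ultimately have "periodic_approx q (P - R - S) B L K'" using IH by (simp add: m_def)
  then have "periodic_approx q (P - R - S + R + S) (B + D) L K'"
    using b_periodic R_b S by (rule periodic_approx_add)
  then show ?thesis by (simp add: D_def)
qed

text \<open>The summand \<open>2 (q\<^sup>k + 1)\<close> of \<open>M\<close> secures the hypothesis \<open>(q\<^sup>k + 1) E < 1\<close> of the step.\<close>
lemma periodic_approx_step_uniform:
  assumes q: "q \<ge> 2" and k: "k \<ge> 2" and "M' > 0" and K2: "k - 1 + k * K + k \<le> K2"
    and IH: "\<forall>P E L. degree P \<le> k - 1 \<and> 0 \<le> E \<and> E * M' \<le> 1 \<and> L2 \<le> L \<and>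
      near_int_cubes q P E (k - 1 + k * K + k) L (k - 1) \<longrightarrow> periodic_approx q P (M' * E) L K2"
  defines "M \<equiv> real q ^ (k\<^sup>2 + 1) + M' * (1 + 2 ^ k * real q ^ (k\<^sup>2 + 1)) + 2 * (real q ^ k + 1)"
  shows "M > 0" and "\<forall>P E L. degree P \<le> k \<and> 0 \<le> E \<and> E * M \<le> 1 \<and> max L2 (K + k + 1) \<le> L \<and>
      near_int_cubes q P E K L k \<longrightarrow> periodic_approx q P (M * E) L K2"
proof -
  define Bq where "Bq = real q ^ (k\<^sup>2 + 1)"
  have "Bq \<ge> 0" "0 \<le> real q ^ k" by (simp_all add: Bq_def)
  moreover have "0 \<le> M' * (1 + 2 ^ k * Bq)" using \<open>M' > 0\<close> \<open>Bq \<ge> 0\<close> by simp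
  ultimately show "M > 0" unfolding M_def Bq_def[symmetric]
    by (intro add_nonneg_pos add_nonneg_nonneg) (auto intro: add_nonneg_pos)
  show "\<forall>P E L. degree P \<le> k \<and> 0 \<le> E \<and> E * M \<le> 1 \<and> max L2 (K + k + 1) \<le> L \<and>
      near_int_cubes q P E K L k \<longrightarrow> periodic_approx q P (M * E) L K2"
  proof (intro allI impI, elim conjE)
    fix P E L assume P: "degree P \<le> k" and E: "0 \<le> E" "E * M \<le> 1" and L: "max L2 (K + k + 1) \<le> L"
      and H: "near_int_cubes q P E K L k"
    have "E * (M' * (1 + 2 ^ k * Bq)) \<le> E * M"
      using E(1) \<open>Bq \<ge> 0\<close> by (intro mult_left_mono) (simp_all add: M_def Bq_def)
    then have E': "(1 + 2 ^ k * Bq) * E * M' \<le> 1" using E(2) by (simp add: mult_ac)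
    have "E * (2 * (real q ^ k + 1)) \<le> E * M"
      using E(1) \<open>M' > 0\<close> \<open>Bq \<ge> 0\<close> by (intro mult_left_mono) (simp_all add: M_def Bq_def)
    then have small: "(real q ^ k + 1) * E < 1" using E by (simp add: algebra_simps)
    have "periodic_approx q P (M' * ((1 + 2 ^ k * Bq) * E) + Bq * E) L K2"
      unfolding Bq_def
    proof (rule periodic_approx_step[OF q k P small _ H K2])
      show "K + k + 1 \<le> L" using L by simp
    qed (use IH E' E(1) \<open>Bq \<ge> 0\<close> L in \<open>auto simp: Bq_def\<close>)
    moreover have "M' * ((1 + 2 ^ k * Bq) * E) + Bq * E \<le> M * E"
      using E(1) by (simp add: M_def Bq_def algebra_simps)
    ultimately show "periodic_approx q P (M * E) L K2" by (rule periodic_approx_mono)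
  qed
qed

lemma periodic_approx_of_near_int_cubes:
  assumes q: "q \<ge> 2"
  shows "\<exists>M>0. \<exists>K'\<ge>K. \<exists>L0. \<forall>P E L. degree P \<le> k \<and> 0 \<le> E \<and> E * M \<le> 1 \<and> L0 \<le> L \<and>
           near_int_cubes q P E K L k \<longrightarrow> periodic_approx q P (M * E) L K'"
proof (induction k arbitrary: K)
  case 0
  show ?case by (intro exI[of _ 1] exI[of _ K] conjI) (auto intro: periodic_approx_degree_le_1)
next
  case (Suc k)
  show ?case
  proof (cases "k = 0")
    case True
    then show ?thesis
      by (intro exI[of _ 1] exI[of _ K] conjI) (auto intro: periodic_approx_degree_le_1)
  next
    case False
    define K1 where "K1 = Suc k - 1 + Suc k * K + Suc k"
    obtain M' K2 L2 where "M' > 0" "K1 \<le> K2" and IH: "\<forall>P E L. degree P \<le> Suc k - 1 \<and> 0 \<le> E \<and>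
        E * M' \<le> 1 \<and> L2 \<le> L \<and> near_int_cubes q P E K1 L (Suc k - 1) \<longrightarrow> periodic_approx q P (M' * E) L K2"
      using Suc.IH[of K1] by auto
    have "2 \<le> Suc k" using False by simp
    note step = periodic_approx_step_uniform[OF q this \<open>M' > 0\<close> \<open>K1 \<le> K2\<close>[unfolded K1_def]
        IH[unfolded K1_def]]
    have "K \<le> K2" using \<open>K1 \<le> K2\<close> by (simp add: K1_def)
    then show ?thesis using step by blast
  qed
qed

section \<open>Almost polynomial phases\<close>

lemma near_int_cubes_of_phase_approx:
  assumes q: "q \<ge> 2" and f: "q_multiplicative q f" "\<forall>n. norm (f n) = 1" and "0 \<le> \<epsilon>"
    and small: "4 * k * q * card {n. n < q ^ L \<and> \<not> near_int \<epsilon> (poly p (real n) - phase (f n))} < q ^ L"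
  shows "near_int_cubes q p (2 ^ k * \<epsilon>) 0 L k"
  unfolding near_int_cubes_def
proof (intro allI impI)
  fix r j assume rj: "2 \<le> r \<and> r \<le> k \<and> 0 \<le> j \<and> j + 1 + r \<le> L"
  define Bad where "Bad = {n. n < q ^ L \<and> \<not> near_int \<epsilon> (poly p (real n) - phase (f n))}"
  have "finite Bad" by (simp add: Bad_def)
  have r: "1 \<le> r" "2 \<le> r" "j + 1 + r \<le> L" using rj by simp_all
  have "4 * r * q * card Bad \<le> 4 * k * q * card Bad" using rj by (intro mult_right_mono) auto
  then have "4 * r * q * card Bad < q ^ L" using small unfolding Bad_def by linarith
  then obtain a where a: "a mod q ^ Suc j < q ^ j"
    and av: "\<forall>v\<in>cube_vertices (digit_cube q r j) a. v < q ^ L \<and> v \<notin> Bad"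
    using exists_digit_cube_avoiding[OF q r(1) r(3) \<open>finite Bad\<close>] by blast
  have "\<forall>v\<in>cube_vertices (digit_cube q r j) a. near_int \<epsilon> (poly p (real v) - phase (f v))"
    using av unfolding Bad_def by blast
  then have "near_int (2 ^ r * \<epsilon>) (cube_diff (\<lambda>n. poly p (real n)) (digit_cube q r j) a)"
    by (rule near_int_cube_diff_digit_cube[OF f q r(2) a])
  moreover have "(2::real) ^ r * \<epsilon> \<le> 2 ^ k * \<epsilon>"
    using rj \<open>0 \<le> \<epsilon>\<close> by (intro mult_right_mono power_increasing) auto
  ultimately have "near_int (2 ^ k * \<epsilon>) (cube_diff (\<lambda>n. poly p (real n)) (digit_cube q r j) a)"
    by (rule near_int_mono)
  then show "\<exists>a. (\<forall>v\<in>cube_vertices (digit_cube q r j) a. v < q ^ L) \<and>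
      near_int (2 ^ k * \<epsilon>) (cube_diff (\<lambda>n. poly p (real n)) (digit_cube q r j) a)"
    using av by blast
qed

lemma exceptions_subset_of_near_int:
  assumes "\<forall>n. norm (f n) = 1" and "\<forall>n<N. near_int B (g n - h n)" and "E + B \<le> E'"
  shows "{n. n < N \<and> \<not> (\<exists>\<theta>. \<bar>\<theta>\<bar> \<le> E' \<and> f n = e (h n + \<theta>))} \<subseteq>
    {n. n < N \<and> \<not> (\<exists>\<theta>. \<bar>\<theta>\<bar> \<le> E \<and> f n = e (g n + \<theta>))}"
proof (intro subsetI CollectI conjI notI; elim CollectE conjE)
  fix n assume n: "n < N" and h: "\<not> (\<exists>\<theta>. \<bar>\<theta>\<bar> \<le> E' \<and> f n = e (h n + \<theta>))"
    and "\<exists>\<theta>. \<bar>\<theta>\<bar> \<le> E \<and> f n = e (g n + \<theta>)"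
  then have "near_int E (g n - phase (f n))" using assms(1) e_perturb_iff_near_int by blast
  then have "near_int (E + B) ((g n - phase (f n)) - (g n - h n))"
    using assms(2) n by (intro near_int_diff) auto
  then have "near_int E' (h n - phase (f n))" using assms(3) by (auto elim: near_int_mono)
  then show False using h assms(1) e_perturb_iff_near_int by blast
qed (simp_all)

lemma card_lt_of_density:
  assumes "real (card X) \<le> \<delta> * real q ^ L" and "\<delta> < 1 / (4 * real s * real q)" and "q \<ge> 1" "s \<ge> 1"
  shows "4 * s * q * card X < q ^ L"
proof -
  have "real (4 * s * q * card X) \<le> 4 * real s * real q * (\<delta> * real q ^ L)"
    using assms(1) by (simp add: mult_left_mono)
  also have "\<dots> < real (q ^ L)" using assms(2-4) by (simp add: field_simps)
  finally show ?thesis by (simp only: of_nat_less_iff)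
qed

lemma polynomial_phase_rigidity:
  assumes q: "q \<ge> 2" and s: "s \<ge> 1" and M: "M > 0"
    and main: "\<And>P E L. degree P \<le> s - 1 \<Longrightarrow> 0 \<le> E \<Longrightarrow> E * M \<le> 1 \<Longrightarrow> L0 \<le> L \<Longrightarrow>
      near_int_cubes q P E 0 L (s - 1) \<Longrightarrow> periodic_approx q P (M * E) L K'"
    and f: "\<forall>n. norm (f n) = 1" "q_multiplicative q f" and p: "degree p < s"
    and \<epsilon>: "\<epsilon> < 1 / (M * 2 ^ s)" and \<delta>: "\<delta> < 1 / (4 * real s * real q)" and L: "L0 \<le> L"
    and exceptions: "real (card {n. n < q ^ L \<and>
      \<not> (\<exists>\<theta>. \<bar>\<theta>\<bar> \<le> \<epsilon> \<and> f n = e (poly p (real n) + \<theta>))}) \<le> \<delta> * real q ^ L"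
  shows "\<exists>\<alpha> \<beta> (b :: rat poly) k. k \<le> K' \<and>
    (\<forall>n::nat. frac (poly b (of_nat (n + q ^ k))) = frac (poly b (of_nat n))) \<and>
    real (card {n. n < q ^ L \<and> \<not> (\<exists>\<theta>'. \<bar>\<theta>'\<bar> \<le> (M * 2 ^ s + 1) * \<epsilon> \<and>
      f n = e (\<alpha> * real n + \<beta> + real_of_rat (poly b (of_nat n)) + \<theta>'))}) \<le> \<delta> * real q ^ L"
proof -
  define Bad where "Bad = {n. n < q ^ L \<and> \<not> (\<exists>\<theta>. \<bar>\<theta>\<bar> \<le> \<epsilon> \<and> f n = e (poly p (real n) + \<theta>))}"
  have Bad_eq: "Bad = {n. n < q ^ L \<and> \<not> near_int \<epsilon> (poly p (real n) - phase (f n))}"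
    using f(1) by (simp add: Bad_def e_perturb_iff_near_int)
  have "finite Bad" by (simp add: Bad_def)
  have small: "4 * s * q * card Bad < q ^ L"
    using exceptions \<delta> q s unfolding Bad_def[symmetric] by (intro card_lt_of_density) auto
  have "0 \<le> \<epsilon>"
  proof (rule ccontr)
    assume "\<not> 0 \<le> \<epsilon>"
    then have "Bad = {..<q ^ L}" by (auto simp: Bad_eq near_int_def)
    then show False using small s q by (simp add: mult_ac)
  qed
  have "4 * (s - 1) * q * card Bad \<le> 4 * s * q * card Bad" by (intro mult_right_mono) auto
  then have "4 * (s - 1) * q * card Bad < q ^ L" using small by linarith
  then have cubes: "near_int_cubes q p (2 ^ (s - 1) * \<epsilon>) 0 L (s - 1)"
    using near_int_cubes_of_phase_approx[OF q f(2,1) \<open>0 \<le> \<epsilon>\<close>] unfolding Bad_eq by blast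
  have "M * 2 ^ (s - 1) * \<epsilon> \<le> M * 2 ^ s * \<epsilon>"
    using M \<open>0 \<le> \<epsilon>\<close> by (intro mult_right_mono mult_left_mono power_increasing) auto
  moreover have "\<epsilon> * (M * 2 ^ s) < 1" using \<epsilon> M by (simp add: pos_less_divide_eq)
  ultimately have "2 ^ (s - 1) * \<epsilon> * M \<le> 1" by (simp add: mult_ac)
  then have "periodic_approx q p (M * (2 ^ (s - 1) * \<epsilon>)) L K'"
    using p \<open>0 \<le> \<epsilon>\<close> L cubes by (intro main) simp_all
  then obtain \<alpha> \<beta> b where b: "periodic_mod_Ints (\<lambda>n. poly b (of_nat n :: rat)) (q ^ K')"
    and approx: "\<forall>n<q ^ L. near_int (M * (2 ^ (s - 1) * \<epsilon>))
      (poly p (real n) - (\<alpha> * real n + \<beta> + real_of_rat (poly b (of_nat n))))"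
    unfolding periodic_approx_def by (auto simp: diff_diff_eq)
  have "\<epsilon> + M * (2 ^ (s - 1) * \<epsilon>) \<le> (M * 2 ^ s + 1) * \<epsilon>"
    using \<open>M * 2 ^ (s - 1) * \<epsilon> \<le> M * 2 ^ s * \<epsilon>\<close> by (simp add: algebra_simps)
  with f(1) approx have "{n. n < q ^ L \<and> \<not> (\<exists>\<theta>'. \<bar>\<theta>'\<bar> \<le> (M * 2 ^ s + 1) * \<epsilon> \<and>
      f n = e (\<alpha> * real n + \<beta> + real_of_rat (poly b (of_nat n)) + \<theta>'))} \<subseteq> Bad"
    unfolding Bad_def by (rule exceptions_subset_of_near_int)
  then have "card {n. n < q ^ L \<and> \<not> (\<exists>\<theta>'. \<bar>\<theta>'\<bar> \<le> (M * 2 ^ s + 1) * \<epsilon> \<and>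
      f n = e (\<alpha> * real n + \<beta> + real_of_rat (poly b (of_nat n)) + \<theta>'))} \<le> card Bad"
    using \<open>finite Bad\<close> by (rule card_mono[rotated])
  then have "real (card {n. n < q ^ L \<and> \<not> (\<exists>\<theta>'. \<bar>\<theta>'\<bar> \<le> (M * 2 ^ s + 1) * \<epsilon> \<and>
      f n = e (\<alpha> * real n + \<beta> + real_of_rat (poly b (of_nat n)) + \<theta>'))}) \<le> \<delta> * real q ^ L"
    using exceptions unfolding Bad_def by linarith
  moreover have "\<forall>n. frac (poly b (of_nat (n + q ^ K'))) = frac (poly b (of_nat n))"
    using periodic_mod_Ints_frac[OF b] by blast
  ultimately show ?thesis by (intro exI[of _ K'] exI) simp
qed

theorem proposition4p1:
  fixes q s :: nat
  assumes "q \<ge> 2" and "s \<ge> 2"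
  shows "\<exists>\<epsilon>0::real. \<epsilon>0 > 0 \<and> (\<exists>\<delta>0::real. \<delta>0 > 0 \<and> (\<exists>L0::nat. L0 > 0 \<and>
          (\<exists>C::real. C > 0 \<and> (\<exists>k0::nat.
    \<forall>(f :: nat \<Rightarrow> complex) (p :: real poly) (\<epsilon>::real) (\<delta>::real) (L::nat).
      (\<forall>n. norm (f n) = 1) \<and> q_multiplicative q f \<and> degree p < s \<and>
      \<epsilon> < \<epsilon>0 \<and> \<delta> < \<delta>0 \<and> L \<ge> L0 \<and>
      real (card {n. n < q ^ L \<and>
         \<not> (\<exists>\<theta>. \<bar>\<theta>\<bar> \<le> \<epsilon> \<and> f n = e (poly p (real n) + \<theta>))}) \<le> \<delta> * real q ^ L
      \<longrightarrow>
      (\<exists>(\<alpha>::real) (\<beta>::real) (b :: rat poly) (k::nat). k \<le> k0 \<and>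
         (\<forall>n::nat. frac (poly b (of_nat (n + q ^ k))) = frac (poly b (of_nat n))) \<and>
         real (card {n. n < q ^ L \<and>
           \<not> (\<exists>\<theta>'. \<bar>\<theta>'\<bar> \<le> C * \<epsilon> \<and>
                f n = e (\<alpha> * real n + \<beta> + real_of_rat (poly b (of_nat n)) + \<theta>'))})
           \<le> \<delta> * real q ^ L)))))"
proof -
  obtain M K' L0 where "M > 0" and main: "\<forall>P E L. degree P \<le> s - 1 \<and> 0 \<le> E \<and> E * M \<le> 1 \<and>
      L0 \<le> L \<and> near_int_cubes q P E 0 L (s - 1) \<longrightarrow> periodic_approx q P (M * E) L K'"
    using periodic_approx_of_near_int_cubes[OF assms(1)] by blast
  have "0 < M * 2 ^ s + 1" using \<open>M > 0\<close> by (intro add_pos_pos mult_pos_pos) simp_all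
  note rigidity = polynomial_phase_rigidity[OF assms(1) _ \<open>M > 0\<close>, of s L0 K']
  show ?thesis
    apply (rule exI[of _ "1 / (M * 2 ^ s)"], rule conjI, simp add: \<open>M > 0\<close>)
    apply (rule exI[of _ "1 / (4 * real s * real q)"], rule conjI, use assms in simp)
    apply (rule exI[of _ "max L0 1"], rule conjI, simp)
    apply (rule exI[of _ "M * 2 ^ s + 1"], rule conjI, fact)
    apply (rule exI[of _ K'], intro allI impI, elim conjE)
    using rigidity main assms(2) by simp
qed

end
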